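(* Let $S$ be a finite $p$-group, let $\mathbb{W}(S)$ be the set of elementary abelian normal subgroups $A$ of $S$ such that for every $s\in S$, $[A,s,s]=\{1\}$ implies $[A,s]=\{1\}$, and let $W(S)=\langle \mathbb{W}(S)\rangle$. Then: (i) $W(S)$ is a characteristic subgroup of $S$; (ii) $W(S)\in\mathbb{W}(S)$, and it is the unique largest member of $\mathbb{W}(S)$ with respect to inclusion; (iii) $\Omega(Z(S))\le W(S)$; (iv) if $W(S)\le T\le S$ then $W(S)\le W(T)$.
   Context: $\Omega(X)$ denotes the subgroup generated by elements of order $p$ in $X$; $[A,s,s]=[[A,s],s]$. *)

theory Defs
  imports "HOL-Algebra.Algebra"
begin

definition gcomm :: "('a, 'b) monoid_scheme \<Rightarrow> 'a \<Rightarrow> 'a \<Rightarrow> 'a" where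
  "gcomm G x y = inv\<^bsub>G\<^esub> x \<otimes>\<^bsub>G\<^esub> inv\<^bsub>G\<^esub> y \<otimes>\<^bsub>G\<^esub> x \<otimes>\<^bsub>G\<^esub> y"

definition comm_elt_sub :: "('a, 'b) monoid_scheme \<Rightarrow> 'a set \<Rightarrow> 'a \<Rightarrow> 'a set" where
  "comm_elt_sub G H s = generate G {gcomm G h s | h. h \<in> H}"

definition p_group :: "('a, 'b) monoid_scheme \<Rightarrow> nat \<Rightarrow> bool" where
  "p_group G p \<longleftrightarrow> group G \<and> Factorial_Ring.prime p \<and> finite (carrier G) \<and> (\<exists>n. card (carrier G) = p ^ n)"

definition elem_abelian_sub :: "('a, 'b) monoid_scheme \<Rightarrow> nat \<Rightarrow> 'a set \<Rightarrow> bool" where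
  "elem_abelian_sub G p A \<longleftrightarrow> subgroup A G \<and>
     (\<forall>x\<in>A. \<forall>y\<in>A. x \<otimes>\<^bsub>G\<^esub> y = y \<otimes>\<^bsub>G\<^esub> x) \<and>
     (\<forall>x\<in>A. x [^]\<^bsub>G\<^esub> p = \<one>\<^bsub>G\<^esub>)"

definition WW :: "('a, 'b) monoid_scheme \<Rightarrow> nat \<Rightarrow> 'a set set" where
  "WW G p = {A. A \<lhd> G \<and> elem_abelian_sub G p A \<and>
     (\<forall>s\<in>carrier G. comm_elt_sub G (comm_elt_sub G A s) s = {\<one>\<^bsub>G\<^esub>}
                    \<longrightarrow> comm_elt_sub G A s = {\<one>\<^bsub>G\<^esub>})}"

definition Wsub :: "('a, 'b) monoid_scheme \<Rightarrow> nat \<Rightarrow> 'a set" where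
  "Wsub G p = generate G (\<Union> (WW G p))"

definition characteristic :: "('a, 'b) monoid_scheme \<Rightarrow> 'a set \<Rightarrow> bool" where
  "characteristic G H \<longleftrightarrow> subgroup H G \<and> (\<forall>\<phi>\<in>iso G G. \<phi> ` H = H)"

definition center :: "('a, 'b) monoid_scheme \<Rightarrow> 'a set" where
  "center G = {z \<in> carrier G. \<forall>g\<in>carrier G. z \<otimes>\<^bsub>G\<^esub> g = g \<otimes>\<^bsub>G\<^esub> z}"

definition OmegaP :: "('a, 'b) monoid_scheme \<Rightarrow> nat \<Rightarrow> 'a set \<Rightarrow> 'a set" where
  "OmegaP G p Y = generate G {x \<in> Y. Multiplicative_Group.group.ord G x = p}"

end

theory Submission
  imports Defs
begin

text \<open>
  Read \<open>A \<in> \<bbbW>(S)\<close> as: \<open>A\<close> is an elementary abelian normal subgroup, and every \<open>s\<close>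
  centralizing \<open>[A,s]\<close> centralizes \<open>A\<close>. Two members \<open>A\<close>, \<open>B\<close> centralize each other:
  for \<open>b \<in> B\<close> the subgroup \<open>[A,b] \<le> B\<close> is centralized by \<open>b\<close> because \<open>B\<close> is abelian,
  hence so is \<open>A\<close>. It follows that \<open>AB \<in> \<bbbW>(S)\<close>, so a maximal member of the finite set
  \<open>\<bbbW>(S)\<close> contains all others and is \<open>W(S)\<close>. Automorphisms permute \<open>\<bbbW>(S)\<close>, which
  makes \<open>W(S)\<close> characteristic; \<open>\<Omega>(Z(S))\<close> is central of exponent \<open>p\<close>, hence a member;
  and a member contained in \<open>T\<close> stays a member of \<open>\<bbbW>(T)\<close>, as \<open>[A,s]\<close> is the same
  subgroup computed in \<open>T\<close> or in \<open>S\<close>.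
\<close>

definition centralizer :: "('a, 'b) monoid_scheme \<Rightarrow> 'a \<Rightarrow> 'a set" where
  "centralizer G s = {x \<in> carrier G. x \<otimes>\<^bsub>G\<^esub> s = s \<otimes>\<^bsub>G\<^esub> x}"

context group
begin

lemma gcomm_closed [simp]: "x \<in> carrier G \<Longrightarrow> y \<in> carrier G \<Longrightarrow> gcomm G x y \<in> carrier G"
  unfolding gcomm_def by simp

lemma gcomm_eq_one_iff:
  assumes "x \<in> carrier G" "y \<in> carrier G"
  shows "gcomm G x y = \<one> \<longleftrightarrow> x \<otimes> y = y \<otimes> x"
proof -
  have "gcomm G x y = inv (y \<otimes> x) \<otimes> (x \<otimes> y)"
    using assms by (simp add: gcomm_def inv_mult_group m_assoc)
  with assms show ?thesis by (simp add: inv_solve_left')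
qed

lemma gcomm_in_subgroup:
  "subgroup T G \<Longrightarrow> x \<in> T \<Longrightarrow> y \<in> T \<Longrightarrow> gcomm G x y \<in> T"
  unfolding gcomm_def by (intro subgroup.m_closed subgroup.m_inv_closed; assumption?)+

lemma gcomm_in_normal:
  assumes N: "N \<lhd> G" and x: "x \<in> carrier G" and y: "y \<in> N"
  shows "gcomm G x y \<in> N"
proof -
  have sub: "subgroup N G" using N by (rule normal_imp_subgroup)
  have "inv y \<in> N" using sub y by (rule subgroup.m_inv_closed)
  then have "inv x \<otimes> inv y \<otimes> inv (inv x) \<in> N"
    using N x normal_inv_iff by blast
  then show ?thesis
    unfolding gcomm_def using x y sub by (simp add: subgroup.m_closed)
qed

lemma comm_elt_sub_carrier:
  assumes "H \<subseteq> carrier G" "s \<in> carrier G"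
  shows "comm_elt_sub G H s \<subseteq> carrier G"
proof -
  have "{gcomm G h s | h. h \<in> H} \<subseteq> carrier G" using assms by auto
  then show ?thesis unfolding comm_elt_sub_def using generate_in_carrier by blast
qed

lemma comm_elt_sub_mono:
  "H \<subseteq> K \<Longrightarrow> K \<subseteq> carrier G \<Longrightarrow> s \<in> carrier G \<Longrightarrow> comm_elt_sub G H s \<subseteq> comm_elt_sub G K s"
  unfolding comm_elt_sub_def by (rule mono_generate) blast

lemma comm_elt_sub_subset_subgroup:
  assumes "subgroup T G" "H \<subseteq> T" "s \<in> T"
  shows "comm_elt_sub G H s \<subseteq> T"
  unfolding comm_elt_sub_def using assms gcomm_in_subgroup
  by (intro generate_subgroup_incl) auto

lemma comm_elt_sub_eq_one_iff:
  assumes "H \<subseteq> carrier G" "s \<in> carrier G"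
  shows "comm_elt_sub G H s = {\<one>} \<longleftrightarrow> H \<subseteq> centralizer G s"
proof
  assume "comm_elt_sub G H s = {\<one>}"
  then have "gcomm G h s = \<one>" if "h \<in> H" for h
    using that unfolding comm_elt_sub_def by (auto intro: generate.incl)
  then show "H \<subseteq> centralizer G s"
    using assms gcomm_eq_one_iff unfolding centralizer_def by blast
next
  assume "H \<subseteq> centralizer G s"
  then have "{gcomm G h s | h. h \<in> H} \<subseteq> {\<one>}"
    using assms gcomm_eq_one_iff unfolding centralizer_def by blast
  then show "comm_elt_sub G H s = {\<one>}"
    unfolding comm_elt_sub_def
    using generate_subgroup_incl[OF _ triv_subgroup] generate.one by blast
qed

lemma centralizer_subgroup:
  assumes s: "s \<in> carrier G"
  shows "subgroup (centralizer G s) G"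
proof (rule subgroupI)
  fix x assume "x \<in> centralizer G s"
  then have x: "x \<in> carrier G" "x \<otimes> s = s \<otimes> x" unfolding centralizer_def by auto
  have "inv x \<otimes> s = inv x \<otimes> (s \<otimes> x) \<otimes> inv x" using x s by (simp add: m_assoc)
  also have "\<dots> = inv x \<otimes> (x \<otimes> s) \<otimes> inv x" using x(2) by simp
  also have "\<dots> = s \<otimes> inv x" using x(1) s by (simp add: m_assoc[symmetric])
  finally show "inv x \<in> centralizer G s" using x unfolding centralizer_def by simp
next
  fix x y assume "x \<in> centralizer G s" "y \<in> centralizer G s"
  then have x: "x \<in> carrier G" "x \<otimes> s = s \<otimes> x" and y: "y \<in> carrier G" "y \<otimes> s = s \<otimes> y"
    unfolding centralizer_def by auto
  have "x \<otimes> y \<otimes> s = x \<otimes> (s \<otimes> y)" using x(1) y s by (simp add: m_assoc)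
  also have "\<dots> = s \<otimes> (x \<otimes> y)" using x y(1) s by (simp add: m_assoc[symmetric])
  finally show "x \<otimes> y \<in> centralizer G s" using x(1) y(1) unfolding centralizer_def by simp
qed (use s in \<open>auto simp: centralizer_def\<close>)

lemma centralizer_sym:
  "x \<in> carrier G \<Longrightarrow> y \<in> carrier G \<Longrightarrow> x \<in> centralizer G y \<longleftrightarrow> y \<in> centralizer G x"
  unfolding centralizer_def by auto

lemma set_mult_subset_subgroup:
  assumes "subgroup C G" "H \<subseteq> C" "K \<subseteq> C"
  shows "H <#> K \<subseteq> C"
  using assms unfolding set_mult_def by (auto intro: subgroup.m_closed)

lemma subset_set_mult_left:
  assumes H: "H \<subseteq> carrier G" and K: "subgroup K G"
  shows "H \<subseteq> H <#> K"
proof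
  fix h assume h: "h \<in> H"
  then have "h \<otimes> \<one> \<in> H <#> K" unfolding set_mult_def using subgroup.one_closed[OF K] by blast
  then show "h \<in> H <#> K" using h H by auto
qed

lemma subset_set_mult_right:
  assumes H: "subgroup H G" and K: "K \<subseteq> carrier G"
  shows "K \<subseteq> H <#> K"
proof
  fix k assume k: "k \<in> K"
  then have "\<one> \<otimes> k \<in> H <#> K" unfolding set_mult_def using subgroup.one_closed[OF H] by blast
  then show "k \<in> H <#> K" using k K by auto
qed

lemma in_WW_iff:
  "A \<in> WW G p \<longleftrightarrow> A \<lhd> G \<and> elem_abelian_sub G p A \<and>
     (\<forall>s\<in>carrier G. comm_elt_sub G A s \<subseteq> centralizer G s \<longrightarrow> A \<subseteq> centralizer G s)"
proof (cases "A \<lhd> G")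
  case True
  then have A: "A \<subseteq> carrier G" by (simp add: normal_imp_subgroup subgroup.subset)
  have "comm_elt_sub G (comm_elt_sub G A s) s = {\<one>} \<longleftrightarrow> comm_elt_sub G A s \<subseteq> centralizer G s"
    and "comm_elt_sub G A s = {\<one>} \<longleftrightarrow> A \<subseteq> centralizer G s" if "s \<in> carrier G" for s
    using that by (simp_all add: comm_elt_sub_eq_one_iff comm_elt_sub_carrier A)
  then show ?thesis unfolding WW_def by simp
qed (simp add: WW_def)

lemma WW_normal: "A \<in> WW G p \<Longrightarrow> A \<lhd> G"
  by (simp add: in_WW_iff)

lemma WW_carrier: "A \<in> WW G p \<Longrightarrow> A \<subseteq> carrier G"
  using WW_normal normal_imp_subgroup subgroup.subset by blast

lemma WW_elem_abelian: "A \<in> WW G p \<Longrightarrow> elem_abelian_sub G p A"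
  by (simp add: in_WW_iff)

lemma WW_centralizerD:
  "A \<in> WW G p \<Longrightarrow> s \<in> carrier G \<Longrightarrow> comm_elt_sub G A s \<subseteq> centralizer G s \<Longrightarrow> A \<subseteq> centralizer G s"
  by (simp add: in_WW_iff)

lemma elem_abelian_sub_centralizer:
  "elem_abelian_sub G p A \<Longrightarrow> a \<in> A \<Longrightarrow> A \<subseteq> centralizer G a"
  unfolding elem_abelian_sub_def centralizer_def by (auto dest: subgroup.mem_carrier)

lemma comm_elt_sub_subset_normal:
  assumes "N \<lhd> G" "H \<subseteq> carrier G" "s \<in> N"
  shows "comm_elt_sub G H s \<subseteq> N"
  unfolding comm_elt_sub_def using assms gcomm_in_normal
  by (intro generate_subgroup_incl) (auto intro: normal_imp_subgroup)

lemma WW_centralizes_WW: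
  assumes A: "A \<in> WW G p" and B: "B \<in> WW G p" and b: "b \<in> B"
  shows "A \<subseteq> centralizer G b"
proof (rule WW_centralizerD[OF A])
  show b_carrier: "b \<in> carrier G" using B b WW_carrier by blast
  have "comm_elt_sub G A b \<subseteq> B"
    using comm_elt_sub_subset_normal WW_normal[OF B] WW_carrier[OF A] b by blast
  also have "B \<subseteq> centralizer G b"
    using elem_abelian_sub_centralizer WW_elem_abelian[OF B] b by blast
  finally show "comm_elt_sub G A b \<subseteq> centralizer G b" .
qed

lemma elem_abelian_sub_set_mult:
  assumes A: "elem_abelian_sub G p A" and B: "elem_abelian_sub G p B"
    and AB: "subgroup (A <#> B) G" and comm: "\<And>b. b \<in> B \<Longrightarrow> A \<subseteq> centralizer G b"
  shows "elem_abelian_sub G p (A <#> B)"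
proof -
  have carr: "A \<subseteq> carrier G" "B \<subseteq> carrier G"
    using A B subgroup.subset unfolding elem_abelian_sub_def by blast+
  have B_comm: "B \<subseteq> centralizer G a" if a: "a \<in> A" for a
  proof
    fix b assume b: "b \<in> B"
    then have "a \<in> centralizer G b" using comm a by blast
    then show "b \<in> centralizer G a" using centralizer_sym a b carr by blast
  qed
  have AB_comm: "A <#> B \<subseteq> centralizer G y" if y: "y \<in> A \<union> B" for y
  proof -
    have "A \<subseteq> centralizer G y"
      using y elem_abelian_sub_centralizer[OF A] comm by (cases "y \<in> A") auto
    moreover have "B \<subseteq> centralizer G y"
      using y elem_abelian_sub_centralizer[OF B] B_comm by (cases "y \<in> B") auto
    moreover have "y \<in> carrier G" using y carr by blast
    ultimately show ?thesis using set_mult_subset_subgroup centralizer_subgroup by blast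
  qed
  \<comment> \<open>Each element of \<open>A \<union> B\<close> centralizes \<open>AB\<close>; by symmetry each element of \<open>AB\<close> then
      centralizes \<open>A \<union> B\<close>, hence \<open>AB\<close>.\<close>
  have "A <#> B \<subseteq> centralizer G x" if x: "x \<in> A <#> B" for x
  proof -
    have xc: "x \<in> carrier G" using x subgroup.subset[OF AB] by blast
    have "A \<union> B \<subseteq> centralizer G x"
    proof
      fix y assume y: "y \<in> A \<union> B"
      then have "x \<in> centralizer G y" using AB_comm x by blast
      then show "y \<in> centralizer G x" using centralizer_sym xc y carr by blast
    qed
    then show ?thesis using set_mult_subset_subgroup[OF centralizer_subgroup[OF xc]] by blast
  qed
  then have "x \<otimes> y = y \<otimes> x" if "x \<in> A <#> B" "y \<in> A <#> B" for x y
    using that unfolding centralizer_def by blast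
  moreover have "x [^] p = \<one>" if "x \<in> A <#> B" for x
  proof -
    obtain a b where ab: "a \<in> A" "b \<in> B" "x = a \<otimes> b"
      using \<open>x \<in> A <#> B\<close> unfolding set_mult_def by blast
    have "a \<otimes> b = b \<otimes> a" using comm ab unfolding centralizer_def by blast
    then have "x [^] p = a [^] p \<otimes> b [^] p" using ab carr pow_mult_distrib by blast
    then show ?thesis using A B ab unfolding elem_abelian_sub_def by simp
  qed
  ultimately show ?thesis
    using AB unfolding elem_abelian_sub_def by blast
qed

lemma WW_set_mult:
  assumes A: "A \<in> WW G p" and B: "B \<in> WW G p"
  shows "A <#> B \<in> WW G p"
proof -
  have normal: "A <#> B \<lhd> G"
    using normal_subgroup_set_mult_closed[OF WW_normal[OF A] WW_normal[OF B]] .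
  have sub: "subgroup A G" "subgroup B G" "subgroup (A <#> B) G"
    using WW_normal[OF A] WW_normal[OF B] normal normal_imp_subgroup by blast+
  have "A <#> B \<subseteq> centralizer G s"
    if s: "s \<in> carrier G" and hyp: "comm_elt_sub G (A <#> B) s \<subseteq> centralizer G s" for s
  proof -
    have ABc: "A <#> B \<subseteq> carrier G" using subgroup.subset[OF sub(3)] .
    have "comm_elt_sub G A s \<subseteq> comm_elt_sub G (A <#> B) s"
      using comm_elt_sub_mono[OF subset_set_mult_left[OF WW_carrier[OF A] sub(2)] ABc s] .
    then have "A \<subseteq> centralizer G s" using WW_centralizerD[OF A s] hyp by blast
    moreover have "comm_elt_sub G B s \<subseteq> comm_elt_sub G (A <#> B) s"
      using comm_elt_sub_mono[OF subset_set_mult_right[OF sub(1) WW_carrier[OF B]] ABc s] .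
    then have "B \<subseteq> centralizer G s" using WW_centralizerD[OF B s] hyp by blast
    ultimately show ?thesis
      using centralizer_subgroup[OF s] set_mult_subset_subgroup by blast
  qed
  moreover have "elem_abelian_sub G p (A <#> B)"
    using elem_abelian_sub_set_mult[OF WW_elem_abelian[OF A] WW_elem_abelian[OF B] sub(3)]
      WW_centralizes_WW[OF A B] .
  ultimately show ?thesis
    using normal by (simp add: in_WW_iff)
qed

lemma trivial_in_WW: "{\<one>} \<in> WW G p"
  unfolding in_WW_iff elem_abelian_sub_def centralizer_def
  using one_is_normal triv_subgroup by auto

lemma WW_greatest:
  assumes "finite (carrier G)"
  obtains M where "M \<in> WW G p" "\<And>A. A \<in> WW G p \<Longrightarrow> A \<subseteq> M"
proof -
  have "WW G p \<subseteq> Pow (carrier G)" using WW_carrier by blast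
  then have "finite (WW G p)" using assms by (meson finite_Pow_iff finite_subset)
  then obtain M where M: "M \<in> WW G p" and max: "\<And>B. B \<in> WW G p \<Longrightarrow> M \<subseteq> B \<Longrightarrow> M = B"
    using finite_has_maximal[of "WW G p"] trivial_in_WW by blast
  have "A \<subseteq> M" if A: "A \<in> WW G p" for A
  proof -
    have sub: "subgroup M G" "subgroup A G"
      using WW_normal[OF M] WW_normal[OF A] normal_imp_subgroup by blast+
    have "M <#> A = M"
      using max[OF WW_set_mult[OF M A] subset_set_mult_left[OF WW_carrier[OF M] sub(2)]] by (rule sym)
    then show ?thesis
      using subset_set_mult_right[OF sub(1) WW_carrier[OF A]] by simp
  qed
  with M show thesis by (rule that)
qed

lemma WW_subset_Wsub: "A \<in> WW G p \<Longrightarrow> A \<subseteq> Wsub G p"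
  unfolding Wsub_def by (blast intro: generate.incl)

lemma Wsub_in_WW:
  assumes "finite (carrier G)"
  shows "Wsub G p \<in> WW G p"
proof -
  obtain M where M: "M \<in> WW G p" and greatest: "\<And>A. A \<in> WW G p \<Longrightarrow> A \<subseteq> M"
    using WW_greatest[OF assms, of p] by blast
  have "Wsub G p \<subseteq> M"
    unfolding Wsub_def using greatest normal_imp_subgroup[OF WW_normal[OF M]]
    by (intro generate_subgroup_incl) blast+
  then show ?thesis
    using WW_subset_Wsub[OF M] M by auto
qed

end

context group_hom
begin

lemma gcomm_image:
  "x \<in> carrier G \<Longrightarrow> y \<in> carrier G \<Longrightarrow> h (gcomm G x y) = gcomm H (h x) (h y)"
  unfolding gcomm_def by simp

lemma comm_elt_sub_image:
  assumes A: "A \<subseteq> carrier G" and s: "s \<in> carrier G"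
  shows "comm_elt_sub H (h ` A) (h s) = h ` comm_elt_sub G A s"
proof -
  have "{gcomm H x (h s) | x. x \<in> h ` A} = (\<lambda>a. gcomm H (h a) (h s)) ` A"
    by blast
  also have "\<dots> = h ` {gcomm G a s | a. a \<in> A}"
    using A s gcomm_image by (auto simp: setcompr_eq_image image_image intro!: image_cong)
  moreover have "{gcomm G a s | a. a \<in> A} \<subseteq> carrier G" using A s by auto
  ultimately show ?thesis
    unfolding comm_elt_sub_def by (simp add: generate_img)
qed

lemma image_subset_centralizer_iff:
  assumes inj: "inj_on h (carrier G)" and Y: "Y \<subseteq> carrier G" and s: "s \<in> carrier G"
  shows "h ` Y \<subseteq> centralizer H (h s) \<longleftrightarrow> Y \<subseteq> centralizer G s"
proof -
  have "h y \<otimes>\<^bsub>H\<^esub> h s = h s \<otimes>\<^bsub>H\<^esub> h y \<longleftrightarrow> y \<otimes> s = s \<otimes> y" if y: "y \<in> carrier G" for y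
  proof -
    have "h y \<otimes>\<^bsub>H\<^esub> h s = h s \<otimes>\<^bsub>H\<^esub> h y \<longleftrightarrow> h (y \<otimes> s) = h (s \<otimes> y)"
      using y s by simp
    also have "\<dots> \<longleftrightarrow> y \<otimes> s = s \<otimes> y"
      using y s by (intro inj_on_eq_iff[OF inj]) simp_all
    finally show ?thesis .
  qed
  then show ?thesis
    using Y s unfolding centralizer_def by auto
qed

lemma elem_abelian_sub_image:
  assumes "elem_abelian_sub G p A"
  shows "elem_abelian_sub H p (h ` A)"
proof -
  have A: "subgroup A G" "\<And>x y. x \<in> A \<Longrightarrow> y \<in> A \<Longrightarrow> x \<otimes> y = y \<otimes> x" "\<And>x. x \<in> A \<Longrightarrow> x [^] p = \<one>"
    using assms unfolding elem_abelian_sub_def by auto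
  have "h x \<otimes>\<^bsub>H\<^esub> h y = h y \<otimes>\<^bsub>H\<^esub> h x" if "x \<in> A" "y \<in> A" for x y
    using that A subgroup.subset[OF A(1)] by (metis hom_mult subsetD)
  moreover have "h x [^]\<^bsub>H\<^esub> p = \<one>\<^bsub>H\<^esub>" if "x \<in> A" for x
    using that A subgroup.subset[OF A(1)] by (metis hom_nat_pow hom_one subsetD)
  ultimately show ?thesis
    unfolding elem_abelian_sub_def using subgroup_img_is_subgroup[OF A(1)] by blast
qed

end

context group
begin

lemma WW_image_iso:
  assumes phi: "\<phi> \<in> iso G G" and A: "A \<in> WW G p"
  shows "\<phi> ` A \<in> WW G p"
proof -
  interpret phi: group_hom G G \<phi>
    using phi by (unfold_locales) (simp add: iso_imp_homomorphism)
  have inj: "inj_on \<phi> (carrier G)" and surj: "\<phi> ` carrier G = carrier G"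
    using phi unfolding iso_iff by auto
  have Ac: "A \<subseteq> carrier G" using A by (rule WW_carrier)
  have "\<phi> ` A \<subseteq> centralizer G s"
    if s: "s \<in> carrier G" and hyp: "comm_elt_sub G (\<phi> ` A) s \<subseteq> centralizer G s" for s
  proof -
    obtain t where t: "t \<in> carrier G" "s = \<phi> t" using s surj by blast
    have "\<phi> ` comm_elt_sub G A t \<subseteq> centralizer G (\<phi> t)"
      using hyp t Ac phi.comm_elt_sub_image by simp
    then have "comm_elt_sub G A t \<subseteq> centralizer G t"
      using phi.image_subset_centralizer_iff[OF inj] comm_elt_sub_carrier Ac t by blast
    then have "A \<subseteq> centralizer G t" using A t WW_centralizerD by blast
    then show ?thesis
      using phi.image_subset_centralizer_iff[OF inj Ac] t by blast
  qed
  moreover have "\<phi> ` A \<lhd> G"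
    using iso_normal_subgroup phi WW_normal[OF A] is_group by blast
  ultimately show ?thesis
    using phi.elem_abelian_sub_image WW_elem_abelian[OF A] by (simp add: in_WW_iff)
qed

lemma characteristicI:
  assumes H: "subgroup H G" and invariant: "\<And>\<phi>. \<phi> \<in> iso G G \<Longrightarrow> \<phi> ` H \<subseteq> H"
  shows "characteristic G H"
  unfolding characteristic_def
proof (intro conjI H ballI equalityI)
  fix \<phi> assume phi: "\<phi> \<in> iso G G"
  then show "\<phi> ` H \<subseteq> H" by (rule invariant)
  have surj: "\<phi> ` carrier G = carrier G" using phi unfolding iso_iff by auto
  have "inv_into (carrier G) \<phi> ` H \<subseteq> H"
    using invariant iso_set_sym[OF phi] by blast
  moreover have "h = \<phi> (inv_into (carrier G) \<phi> h)" if "h \<in> H" for h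
    using that surj subgroup.mem_carrier[OF H] by (simp add: f_inv_into_f)
  ultimately show "H \<subseteq> \<phi> ` H" by blast
qed

lemma center_eq_Inter_centralizer: "center G = carrier G \<inter> (\<Inter>g\<in>carrier G. centralizer G g)"
  unfolding center_def centralizer_def by auto

lemma center_subgroup: "subgroup (center G) G"
proof -
  have "subgroup (\<Inter>(insert (carrier G) (centralizer G ` carrier G))) G"
    using subgroup_self centralizer_subgroup by (intro subgroups_Inter) auto
  then show ?thesis by (simp add: center_eq_Inter_centralizer)
qed

lemma center_exponent_subgroup: "subgroup {x \<in> center G. x [^] (n::nat) = \<one>} G"
proof -
  interpret Z: subgroup "center G" G by (rule center_subgroup)
  show ?thesis
  proof (rule subgroupI)
    fix x assume "x \<in> {x \<in> center G. x [^] n = \<one>}"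
    then have x: "x \<in> center G" "x [^] n = \<one>" by auto
    have "inv x [^] n = \<one>" using x Z.mem_carrier[OF x(1)] by (simp add: nat_pow_inv)
    then show "inv x \<in> {x \<in> center G. x [^] n = \<one>}"
      using Z.m_inv_closed[OF x(1)] by simp
  next
    fix x y assume "x \<in> {x \<in> center G. x [^] n = \<one>}" "y \<in> {x \<in> center G. x [^] n = \<one>}"
    then have x: "x \<in> center G" "x [^] n = \<one>" and y: "y \<in> center G" "y [^] n = \<one>" by auto
    have "x \<otimes> y = y \<otimes> x" using x(1) y(1) unfolding center_def by blast
    then have "(x \<otimes> y) [^] n = \<one>"
      using x y Z.mem_carrier[OF x(1)] Z.mem_carrier[OF y(1)] by (simp add: pow_mult_distrib)
    then show "x \<otimes> y \<in> {x \<in> center G. x [^] n = \<one>}"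
      using Z.m_closed[OF x(1) y(1)] by simp
  qed (use Z.subset Z.one_closed in \<open>auto intro!: exI[of _ \<one>]\<close>)
qed

lemma central_subgroup_in_WW:
  assumes A: "subgroup A G" and central: "A \<subseteq> center G" and exponent: "\<And>x. x \<in> A \<Longrightarrow> x [^] p = \<one>"
  shows "A \<in> WW G p"
proof -
  have "A \<subseteq> centralizer G s" if "s \<in> carrier G" for s
    using central that unfolding center_def centralizer_def by blast
  moreover have "x \<otimes> a \<otimes> inv x \<in> A" if x: "x \<in> carrier G" and a: "a \<in> A" for x a
  proof -
    have comm: "a \<otimes> x = x \<otimes> a" using central a x unfolding center_def by blast
    have "x \<otimes> a \<otimes> inv x = a"
      using x subgroup.mem_carrier[OF A a] by (simp flip: comm add: m_assoc)
    then show ?thesis using a by simp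
  qed
  then have "A \<lhd> G" unfolding normal_inv_iff using A by blast
  moreover have "elem_abelian_sub G p A"
    using A central exponent unfolding elem_abelian_sub_def center_def by blast
  ultimately show ?thesis by (simp add: in_WW_iff)
qed

lemma OmegaP_center_in_WW: "OmegaP G p (center G) \<in> WW G p"
proof (rule central_subgroup_in_WW)
  have "x [^] p = \<one>" if "x \<in> center G" "ord x = p" for x
    using that pow_ord_eq_1[of x] unfolding center_def by simp
  then have "OmegaP G p (center G) \<subseteq> {x \<in> center G. x [^] p = \<one>}"
    unfolding OmegaP_def using center_exponent_subgroup
    by (intro generate_subgroup_incl) auto
  then show "OmegaP G p (center G) \<subseteq> center G"
    and "\<And>x. x \<in> OmegaP G p (center G) \<Longrightarrow> x [^] p = \<one>" by auto
  show "subgroup (OmegaP G p (center G)) G"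
    unfolding OmegaP_def using subgroup.subset[OF center_subgroup]
    by (intro generate_is_subgroup) auto
qed

lemma gcomm_consistent:
  "subgroup T G \<Longrightarrow> x \<in> T \<Longrightarrow> y \<in> T \<Longrightarrow> gcomm (G\<lparr>carrier := T\<rparr>) x y = gcomm G x y"
  unfolding gcomm_def by simp

lemma comm_elt_sub_consistent:
  assumes T: "subgroup T G" and Y: "Y \<subseteq> T" and s: "s \<in> T"
  shows "comm_elt_sub (G\<lparr>carrier := T\<rparr>) Y s = comm_elt_sub G Y s"
proof -
  have "{gcomm (G\<lparr>carrier := T\<rparr>) y s | y. y \<in> Y} = {gcomm G y s | y. y \<in> Y}"
    unfolding setcompr_eq_image using Y s by (intro image_cong refl gcomm_consistent[OF T]) auto
  moreover have "{gcomm G y s | y. y \<in> Y} \<subseteq> T"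
    using Y s T gcomm_in_subgroup by blast
  ultimately show ?thesis
    unfolding comm_elt_sub_def using generate_consistent T by simp
qed

lemma WW_restrict:
  assumes T: "subgroup T G" and A: "A \<in> WW G p" and AT: "A \<subseteq> T"
  shows "A \<in> WW (G\<lparr>carrier := T\<rparr>) p"
proof -
  have cond: "comm_elt_sub G A s = {\<one>}"
    if "s \<in> carrier G" "comm_elt_sub G (comm_elt_sub G A s) s = {\<one>}" for s
    using A that unfolding WW_def by blast
  have "comm_elt_sub (G\<lparr>carrier := T\<rparr>) A s = {\<one>}"
    if s: "s \<in> T" and "comm_elt_sub (G\<lparr>carrier := T\<rparr>) (comm_elt_sub (G\<lparr>carrier := T\<rparr>) A s) s = {\<one>}"
    for s
  proof -
    have "comm_elt_sub G (comm_elt_sub G A s) s = {\<one>}"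
      using that comm_elt_sub_consistent[OF T AT s]
        comm_elt_sub_consistent[OF T comm_elt_sub_subset_subgroup[OF T AT s] s] by simp
    then have "comm_elt_sub G A s = {\<one>}"
      using cond subgroup.mem_carrier[OF T s] by blast
    then show ?thesis
      using comm_elt_sub_consistent[OF T AT s] by simp
  qed
  moreover have normal: "A \<lhd> G\<lparr>carrier := T\<rparr>"
    using normal_restrict_supergroup[OF T WW_normal[OF A] AT] .
  moreover have "elem_abelian_sub (G\<lparr>carrier := T\<rparr>) p A"
    using WW_elem_abelian[OF A] normal_imp_subgroup[OF normal]
    unfolding elem_abelian_sub_def by (simp flip: nat_pow_consistent)
  ultimately show ?thesis unfolding WW_def by simp
qed

end

theorem lemma2p12:
  fixes S :: "('a, 'b) monoid_scheme" and p :: nat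
  assumes "p_group S p"
  shows "characteristic S (Wsub S p)
         \<and> (Wsub S p \<in> WW S p \<and> (\<forall>A\<in>WW S p. A \<subseteq> Wsub S p)
            \<and> (\<forall>B\<in>WW S p. (\<forall>A\<in>WW S p. A \<subseteq> B) \<longrightarrow> B = Wsub S p))
         \<and> OmegaP S p (center S) \<subseteq> Wsub S p
         \<and> (\<forall>T. subgroup T S \<and> Wsub S p \<subseteq> T \<longrightarrow> Wsub S p \<subseteq> Wsub (S\<lparr>carrier := T\<rparr>) p)"
proof -
  interpret group S using assms by (simp add: p_group_def)
  have W: "Wsub S p \<in> WW S p"
    using assms by (simp add: p_group_def Wsub_in_WW)
  have greatest: "\<forall>A\<in>WW S p. A \<subseteq> Wsub S p"
    using WW_subset_Wsub by blast
  have unique: "B = Wsub S p" if "B \<in> WW S p" "\<forall>A\<in>WW S p. A \<subseteq> B" for B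
    using subset_antisym[OF WW_subset_Wsub[OF that(1)]] that(2) W by blast
  have "characteristic S (Wsub S p)"
  proof (rule characteristicI)
    show "subgroup (Wsub S p) S" using normal_imp_subgroup[OF WW_normal[OF W]] .
    show "\<phi> ` Wsub S p \<subseteq> Wsub S p" if "\<phi> \<in> iso S S" for \<phi>
      using WW_image_iso[OF that W] by (rule WW_subset_Wsub)
  qed
  moreover have "OmegaP S p (center S) \<subseteq> Wsub S p"
    using OmegaP_center_in_WW by (rule WW_subset_Wsub)
  moreover have "Wsub S p \<subseteq> Wsub (S\<lparr>carrier := T\<rparr>) p" if T: "subgroup T S" "Wsub S p \<subseteq> T" for T
    using group.WW_subset_Wsub[OF subgroup.subgroup_is_group[OF T(1) is_group] WW_restrict[OF T(1) W T(2)]] .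
  ultimately show ?thesis
    using W greatest unique by blast
qed

end
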